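(* Let $X$ be a topological space and $C\subseteq X$. If $C$ is statistically compact, then for every nonthin sequence $(x_n)_{n\in M}$ in $X$ which has no nonthin subsequence statistically convergent in $X$, there exists $N\subseteq M$ with $d(N)=0$ and $x_n\in X\setminus C$ for all $n\in M\setminus N$. Conversely, if $C$ is statistically closed and has this property, then $C$ is statistically compact.
   Context: For $A\subseteq\mathbb{N}$ let $d_n(A)=|A\cap\{1,\dots,n\}|/n$, $\overline{d}(A)=\limsup_n d_n(A)$, $\underline{d}(A)=\liminf_n d_n(A)$, and $d(A)$ their common value when equal. A sequence in $X$ is a map from an infinite subset $M\subseteq\mathbb{N}$ into $X$, written $(x_n)_{n\in M}$; a subsequence is $(x_n)_{n\in N}$ with $N\subseteq M$ infinite. It is nonthin if $\overline{d}(M)>0$. A nonthin sequence $(x_n)_{n\in M}$ is statistically convergent to $a\in X$ if for every open $U\ni a$, $d(\{n\in M:x_n\notin U\})=0$. The statistical closure $\overline{F}^{ST}$ of $F\subseteq X$ is the set of $x\in X$ such that some nonthin sequence in $F$ is statistically convergent to $x$; $F$ is statistically closed if $\overline{F}^{ST}=F$. A topological space is statistically compact if every nonthin sequence in it has a nonthin subsequence that is statistically convergent to some point of the space; a subset is statistically compact if it is so in the subspace topology. *)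

theory Defs
  imports "HOL-Analysis.Analysis"
begin

definition dens_n :: "nat set \<Rightarrow> nat \<Rightarrow> real" where
  "dens_n A n = real (card (A \<inter> {1..n})) / real n"

definition upper_density :: "nat set \<Rightarrow> ereal" where
  "upper_density A = limsup (\<lambda>n. ereal (dens_n A n))"

definition lower_density :: "nat set \<Rightarrow> ereal" where
  "lower_density A = liminf (\<lambda>n. ereal (dens_n A n))"

definition has_density :: "nat set \<Rightarrow> real \<Rightarrow> bool" where
  "has_density A a \<longleftrightarrow> upper_density A = ereal a \<and> lower_density A = ereal a"

definition nonthin :: "nat set \<Rightarrow> bool" where
  "nonthin M \<longleftrightarrow> upper_density M > 0"

definition stat_conv :: "'a topology \<Rightarrow> (nat \<Rightarrow> 'a) \<Rightarrow> nat set \<Rightarrow> 'a \<Rightarrow> bool" where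
  "stat_conv T f M a \<longleftrightarrow> infinite M \<and> nonthin M \<and> f ` M \<subseteq> topspace T \<and> a \<in> topspace T \<and>
     (\<forall>U. openin T U \<and> a \<in> U \<longrightarrow> has_density {n \<in> M. f n \<notin> U} 0)"

definition stat_closure :: "'a topology \<Rightarrow> 'a set \<Rightarrow> 'a set" where
  "stat_closure T F = {x \<in> topspace T. \<exists>M f. infinite M \<and> nonthin M \<and> f ` M \<subseteq> F \<and> stat_conv T f M x}"

definition stat_closed :: "'a topology \<Rightarrow> 'a set \<Rightarrow> bool" where
  "stat_closed T F \<longleftrightarrow> stat_closure T F = F"

definition stat_compact_space :: "'a topology \<Rightarrow> bool" where
  "stat_compact_space T \<longleftrightarrow>
     (\<forall>M f. infinite M \<and> nonthin M \<and> f ` M \<subseteq> topspace T \<longrightarrow>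
        (\<exists>N a. N \<subseteq> M \<and> infinite N \<and> nonthin N \<and> a \<in> topspace T \<and> stat_conv T f N a))"

definition stat_compact :: "'a topology \<Rightarrow> 'a set \<Rightarrow> bool" where
  "stat_compact X C \<longleftrightarrow> stat_compact_space (subtopology X C)"

definition escapes_property :: "'a topology \<Rightarrow> 'a set \<Rightarrow> bool" where
  "escapes_property X C \<longleftrightarrow>
     (\<forall>M f. infinite M \<and> nonthin M \<and> f ` M \<subseteq> topspace X \<and>
        \<not> (\<exists>N a. N \<subseteq> M \<and> infinite N \<and> nonthin N \<and> stat_conv X f N a) \<longrightarrow>
        (\<exists>N. N \<subseteq> M \<and> has_density N 0 \<and> (\<forall>n \<in> M - N. f n \<in> topspace X - C)))"

end

theory Submission
  imports Defs
begin

text \<open>If \<open>C\<close> is statistically compact, the indices with \<open>x\<^sub>n \<in> C\<close> form a thin set: otherwise the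
  corresponding subsequence would have a nonthin subsequence converging statistically in \<open>C\<close>, hence
  in \<open>X\<close>. Conversely, a nonthin sequence in a statistically closed \<open>C\<close> with no statistically
  convergent nonthin subsequence in \<open>C\<close> has none in \<open>X\<close> either, since every statistical limit of a
  sequence in \<open>C\<close> lies in \<open>C\<close>; so by the property it lies outside \<open>C\<close> off a set of density \<open>0\<close>,
  which is absurd for a nonthin index set.\<close>

lemma upper_density_mono: "A \<subseteq> B \<Longrightarrow> upper_density A \<le> upper_density B"
  unfolding upper_density_def
proof (rule Limsup_mono, rule always_eventually, rule allI)
  fix n assume "A \<subseteq> B"
  then have "card (A \<inter> {1..n}) \<le> card (B \<inter> {1..n})"
    by (intro card_mono) auto
  then show "ereal (dens_n A n) \<le> ereal (dens_n B n)"
    unfolding dens_n_def by (simp add: divide_right_mono)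
qed

lemma nonthin_mono: "nonthin A \<Longrightarrow> A \<subseteq> B \<Longrightarrow> nonthin B"
  unfolding nonthin_def using upper_density_mono by (blast intro: less_le_trans)

lemma lower_density_nonneg: "lower_density A \<ge> 0"
  unfolding lower_density_def dens_n_def
  by (rule Liminf_bounded) simp

lemma lower_density_le_upper_density: "lower_density A \<le> upper_density A"
  unfolding lower_density_def upper_density_def
  by (rule Liminf_le_Limsup) simp

lemma has_density_0_iff_not_nonthin: "has_density A 0 \<longleftrightarrow> \<not> nonthin A"
  using lower_density_nonneg[of A] lower_density_le_upper_density[of A]
  unfolding has_density_def nonthin_def zero_ereal_def[symmetric]
  by (metis antisym not_le order.trans)

lemma finite_imp_not_nonthin:
  assumes "finite A"
  shows "\<not> nonthin A"
proof -
  have "upper_density A \<le> limsup (\<lambda>n. ereal (real (card A) / real n))"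
    unfolding upper_density_def
  proof (rule Limsup_mono, rule always_eventually, rule allI)
    fix n
    have "card (A \<inter> {1..n}) \<le> card A" using assms by (intro card_mono) auto
    then show "ereal (dens_n A n) \<le> ereal (real (card A) / real n)"
      unfolding dens_n_def by (simp add: divide_right_mono)
  qed
  also have "limsup (\<lambda>n. ereal (real (card A) / real n)) = 0"
    using lim_const_over_n[of "real (card A)"]
    by (intro lim_imp_Limsup) (simp_all, metis tendsto_ereal zero_ereal_def)
  finally show ?thesis unfolding nonthin_def by simp
qed

lemma nonthin_imp_infinite: "nonthin A \<Longrightarrow> infinite A"
  using finite_imp_not_nonthin by blast

lemma stat_conv_subtopologyD:
  assumes "stat_conv (subtopology X C) f N a" "f ` N \<subseteq> C"
  shows "stat_conv X f N a"
  unfolding stat_conv_def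
proof (intro conjI allI impI)
  note conv = assms(1)[unfolded stat_conv_def]
  show "infinite N" "nonthin N" "f ` N \<subseteq> topspace X" "a \<in> topspace X"
    using conv by auto
  fix U assume "openin X U \<and> a \<in> U"
  then have "openin (subtopology X C) (U \<inter> C)" "a \<in> U \<inter> C"
    using conv by (auto simp: openin_subtopology_Int)
  then have "has_density {n \<in> N. f n \<notin> U \<inter> C} 0"
    using conv by blast
  moreover have "{n \<in> N. f n \<notin> U \<inter> C} = {n \<in> N. f n \<notin> U}" using assms(2) by auto
  ultimately show "has_density {n \<in> N. f n \<notin> U} 0" by simp
qed

lemma stat_conv_subtopologyI:
  assumes "stat_conv X f N a" "f ` N \<subseteq> C" "a \<in> C"
  shows "stat_conv (subtopology X C) f N a"
  unfolding stat_conv_def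
proof (intro conjI allI impI)
  note conv = assms(1)[unfolded stat_conv_def]
  show "infinite N" "nonthin N" "f ` N \<subseteq> topspace (subtopology X C)"
    "a \<in> topspace (subtopology X C)"
    using conv assms(2,3) by auto
  fix V assume V: "openin (subtopology X C) V \<and> a \<in> V"
  then obtain U where U: "openin X U" "V = U \<inter> C" by (auto simp: openin_subtopology)
  then have "has_density {n \<in> N. f n \<notin> U} 0" using conv V by blast
  moreover have "{n \<in> N. f n \<notin> V} = {n \<in> N. f n \<notin> U}" using assms(2) U by auto
  ultimately show "has_density {n \<in> N. f n \<notin> V} 0" by simp
qed

lemma stat_closed_stat_limit_in:
  assumes "stat_closed X C" "stat_conv X f N a" "f ` N \<subseteq> C"
  shows "a \<in> C"
proof -
  have "a \<in> stat_closure X C"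
    using assms(2,3) unfolding stat_closure_def by (auto simp: stat_conv_def)
  then show ?thesis using assms(1) by (simp add: stat_closed_def)
qed

lemma stat_compact_imp_escapes_property:
  assumes "C \<subseteq> topspace X" "stat_compact X C"
  shows "escapes_property X C"
  unfolding escapes_property_def
proof (intro allI impI)
  fix M f
  assume "infinite M \<and> nonthin M \<and> f ` M \<subseteq> topspace X \<and>
      \<not> (\<exists>N a. N \<subseteq> M \<and> infinite N \<and> nonthin N \<and> stat_conv X f N a)"
  then have fM: "f ` M \<subseteq> topspace X"
    and no_conv: "\<And>N a. N \<subseteq> M \<Longrightarrow> nonthin N \<Longrightarrow> \<not> stat_conv X f N a"
    using nonthin_imp_infinite by blast+
  define K where "K = {n \<in> M. f n \<in> C}"
  have "\<not> nonthin K"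
  proof
    assume "nonthin K"
    moreover have "f ` K \<subseteq> topspace (subtopology X C)"
      using assms(1) by (auto simp: K_def)
    ultimately have "\<exists>N a. N \<subseteq> K \<and> infinite N \<and> nonthin N \<and> a \<in> topspace (subtopology X C) \<and>
        stat_conv (subtopology X C) f N a"
      using assms(2) nonthin_imp_infinite unfolding stat_compact_def stat_compact_space_def by blast
    then obtain N a where N: "N \<subseteq> K" "nonthin N" "stat_conv (subtopology X C) f N a"
      by blast
    then have "stat_conv X f N a"
      by (auto simp: K_def intro: stat_conv_subtopologyD[OF N(3)])
    moreover have "N \<subseteq> M" using N(1) by (auto simp: K_def)
    ultimately show False using no_conv N(2) by blast
  qed
  then show "\<exists>N. N \<subseteq> M \<and> has_density N 0 \<and> (\<forall>n \<in> M - N. f n \<in> topspace X - C)"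
    using fM by (intro exI[of _ K]) (auto simp: K_def has_density_0_iff_not_nonthin)
qed

lemma escapes_property_imp_stat_compact:
  assumes "C \<subseteq> topspace X" "stat_closed X C" "escapes_property X C"
  shows "stat_compact X C"
  unfolding stat_compact_def stat_compact_space_def
proof (intro allI impI)
  fix M f
  assume M: "infinite M \<and> nonthin M \<and> f ` M \<subseteq> topspace (subtopology X C)"
  then have fC: "f ` M \<subseteq> C" using assms(1) by auto
  show "\<exists>N a. N \<subseteq> M \<and> infinite N \<and> nonthin N \<and> a \<in> topspace (subtopology X C) \<and>
      stat_conv (subtopology X C) f N a"
  proof (rule ccontr)
    assume no_conv_C: "\<not> ?thesis"
    have no_conv_X: "\<not> (\<exists>N a. N \<subseteq> M \<and> infinite N \<and> nonthin N \<and> stat_conv X f N a)"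
    proof
      assume "\<exists>N a. N \<subseteq> M \<and> infinite N \<and> nonthin N \<and> stat_conv X f N a"
      then obtain N a where N: "N \<subseteq> M" "infinite N" "nonthin N" "stat_conv X f N a"
        by blast
      have fN: "f ` N \<subseteq> C" using N(1) fC by auto
      have "a \<in> C" using stat_closed_stat_limit_in[OF assms(2) N(4) fN] .
      then have "a \<in> topspace (subtopology X C)" "stat_conv (subtopology X C) f N a"
        using assms(1) stat_conv_subtopologyI[OF N(4) fN] by auto
      then show False using no_conv_C N(1-3) by blast
    qed
    have "f ` M \<subseteq> topspace X" using fC assms(1) by blast
    then obtain N where N: "has_density N 0" "\<forall>n \<in> M - N. f n \<in> topspace X - C"
      using assms(3) M no_conv_X unfolding escapes_property_def by meson
    have "M \<subseteq> N" using N(2) fC by auto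
    then have "nonthin N" using M nonthin_mono by blast
    then show False using N(1) by (simp add: has_density_0_iff_not_nonthin)
  qed
qed

theorem mainTheorem16:
  fixes X :: "'a topology" and C :: "'a set"
  assumes "C \<subseteq> topspace X"
  shows "(stat_compact X C \<longrightarrow> escapes_property X C) \<and>
         (stat_closed X C \<and> escapes_property X C \<longrightarrow> stat_compact X C)"
  using stat_compact_imp_escapes_property[OF assms] escapes_property_imp_stat_compact[OF assms]
  by blast

end
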